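(* Let $0<q<1$ (in the paper $q=1/p$ for a prime $p$). For all integers $k\ge0$ and $s\ge0$, $$T_1(k,s)=\frac{\Pi_k(q^2)}{\Pi_{2k}(q)}\Big(1-q^{s+1}\sum_{j=0}^{k-1}q^{2j}\frac{\Pi_{2j}(q)\,\Pi_{j+s}(q^2)}{\Pi_j(q^2)^2\,\Pi_s(q^2)}\Big)$$ and $$T_3(k,s)=\frac{\Pi_k(q^2)}{\Pi_{2k+1}(q)}\Big(1-q-q^{3s+3}\sum_{j=0}^{k-1}q^{2j}\frac{\Pi_{2j+1}(q)\,\Pi_{j+s}(q^2)}{\Pi_j(q^2)^2\,\Pi_s(q^2)}\Big).$$
   Context: For $n\ge 0$, $\Pi_n(q)=\prod_{j=1}^n(1-q^j)$ (so $\Pi_0=1$). For $\beta\in\{1,3\}$, $k\ge0$, $s\ge0$: $T_\beta(k,s)=1$ if $k=0$, and $T_\beta(k,s)=\sum_{j=0}^{s} q^{\beta j}\,\frac{\Pi_{k+j-1}(q^2)}{\Pi_j(q^2)\,\Pi_{k-1}(q^2)}$ if $k\ge1$. Empty sums are $0$. *)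

theory Defs
  imports Complex_Main
begin

definition qPi :: "nat \<Rightarrow> real \<Rightarrow> real" where
  "qPi n q = (\<Prod>j=1..n. 1 - q ^ j)"

definition T :: "nat \<Rightarrow> real \<Rightarrow> nat \<Rightarrow> nat \<Rightarrow> real" where
  "T \<beta> q k s = (if k = 0 then 1 else
     (\<Sum>j=0..s. q ^ (\<beta> * j) * qPi (k + j - 1) (q^2) / (qPi j (q^2) * qPi (k - 1) (q^2))))"

end

theory Submission
  imports Defs
begin

text \<open>Put Q = q^2 and x = q^beta. For k \<ge> 1, T_beta(k, s) is the partial sum
  S_{k-1} = sum_{j \<le> s} x^j [k-1+j, j]_Q of Gaussian binomials. The q-Pascal rule gives
  (1 - x Q^{k+1}) S_{k+1} = S_k - Q^{k+1} x^{s+1} [k+1+s, s]_Q, and multiplying by the q-Pochhammer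
  symbol (x;Q)_{k+1} telescopes this to (x;Q)_{k+1} S_k = 1 - x^{s+1} sum_{j \<le> k} Q^j (x;Q)_j [j+s, s]_Q.
  The prefactors of the theorem are 1/(x;Q)_k in disguise, because Pi_{2k}(q) and Pi_{2k+1}(q)
  split into even factors Pi_k(q^2) and odd factors (q;q^2)_k resp. (1 - q)(q^3;q^2)_k.\<close>

lemma qPi_0 [simp]: "qPi 0 Q = 1"
  unfolding qPi_def by simp

lemma qPi_Suc: "qPi (Suc n) Q = qPi n Q * (1 - Q ^ Suc n)"
  unfolding qPi_def by (simp add: prod.nat_ivl_Suc' mult.commute)

lemma qPi_pos:
  assumes "0 < Q" "Q < 1"
  shows "0 < qPi n Q"
  unfolding qPi_def using assms by (intro prod_pos) (simp add: power_less_one_iff)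

definition qpoch :: "real \<Rightarrow> real \<Rightarrow> nat \<Rightarrow> real" where
  "qpoch x Q m = (\<Prod>i<m. 1 - x * Q ^ i)"

lemma qpoch_0 [simp]: "qpoch x Q 0 = 1"
  unfolding qpoch_def by simp

lemma qpoch_Suc: "qpoch x Q (Suc m) = qpoch x Q m * (1 - x * Q ^ m)"
  unfolding qpoch_def by simp

lemma qpoch_pos:
  assumes "0 < Q" "Q < 1" "0 < x" "x < 1"
  shows "0 < qpoch x Q m"
  unfolding qpoch_def
proof (rule prod_pos)
  fix i
  have "x * Q ^ i \<le> x"
    using assms by (simp add: mult_left_le power_le_one)
  with assms show "0 < 1 - x * Q ^ i" by linarith
qed

definition qbinom :: "real \<Rightarrow> nat \<Rightarrow> nat \<Rightarrow> real" where
  "qbinom Q k j = qPi (k + j) Q / (qPi k Q * qPi j Q)"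

definition qbinom_partial_sum :: "real \<Rightarrow> real \<Rightarrow> nat \<Rightarrow> nat \<Rightarrow> real" where
  "qbinom_partial_sum Q x k s = (\<Sum>j=0..s. x ^ j * qbinom Q k j)"

context
  fixes Q :: real
  assumes Q_pos: "0 < Q" and Q_less_1: "Q < 1"
begin

lemma qPi_nonzero: "qPi n Q \<noteq> 0"
  using qPi_pos[OF Q_pos Q_less_1] by (metis less_irrefl)

lemma qbinom_0_right [simp]: "qbinom Q k 0 = 1"
  and qbinom_0_left [simp]: "qbinom Q 0 j = 1"
  unfolding qbinom_def using qPi_nonzero by simp_all

lemma qbinom_Suc_Suc:
  "qbinom Q (Suc k) (Suc j) = qbinom Q k (Suc j) + Q ^ Suc k * qbinom Q (Suc k) j"
proof -
  define a b P where "a = 1 - Q ^ Suc k" and "b = 1 - Q ^ Suc j" and "P = qPi (Suc (k + j)) Q"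
  have "Q ^ Suc n < 1" for n
    using Q_pos Q_less_1 by (metis power_Suc_less_one less_le)
  then have "a \<noteq> 0" "b \<noteq> 0"
    unfolding a_def b_def by (metis less_irrefl eq_iff_diff_eq_0)+
  have "1 - Q ^ Suc (Suc (k + j)) = a + Q ^ Suc k * b"
    unfolding a_def b_def by (simp add: algebra_simps power_add[symmetric])
  then have "qPi (Suc k + Suc j) Q = P * (a + Q ^ Suc k * b)"
    unfolding P_def using qPi_Suc[of "Suc (k + j)" Q] by simp
  moreover have "qPi (k + Suc j) Q = P" "qPi (Suc k + j) Q = P"
    unfolding P_def by simp_all
  moreover have "qPi (Suc k) Q = qPi k Q * a" "qPi (Suc j) Q = qPi j Q * b"
    unfolding a_def b_def by (simp_all add: qPi_Suc)
  ultimately show ?thesis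
    unfolding qbinom_def using \<open>a \<noteq> 0\<close> \<open>b \<noteq> 0\<close> qPi_nonzero
    by (simp add: field_simps)
qed

lemma qbinom_partial_sum_0: "(1 - x) * qbinom_partial_sum Q x 0 s = 1 - x ^ Suc s"
  unfolding qbinom_partial_sum_def using sum_gp_basic[of x s]
  by (simp add: atLeast0AtMost)

lemma qbinom_partial_sum_Suc:
  "(1 - x * Q ^ Suc k) * qbinom_partial_sum Q x (Suc k) s
     = qbinom_partial_sum Q x k s - Q ^ Suc k * x ^ Suc s * qbinom Q (Suc k) s"
proof (induction s)
  case 0
  then show ?case
    unfolding qbinom_partial_sum_def by (simp add: algebra_simps)
next
  case (Suc s)
  let ?S = "qbinom_partial_sum Q x"
  have "?S (Suc k) (Suc s) = ?S (Suc k) s + x ^ Suc s * qbinom Q (Suc k) (Suc s)"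
    and "?S k (Suc s) = ?S k s + x ^ Suc s * qbinom Q k (Suc s)"
    unfolding qbinom_partial_sum_def by simp_all
  with Suc.IH show ?case
    by (simp add: qbinom_Suc_Suc algebra_simps)
qed

lemma qpoch_mult_qbinom_partial_sum:
  "qpoch x Q (Suc k) * qbinom_partial_sum Q x k s
     = 1 - x ^ Suc s * (\<Sum>j<Suc k. Q ^ j * qpoch x Q j * qbinom Q j s)"
proof (induction k)
  case 0
  then show ?case using qbinom_partial_sum_0 by (simp add: qpoch_Suc)
next
  case (Suc k)
  have "qpoch x Q (Suc (Suc k)) * qbinom_partial_sum Q x (Suc k) s
      = qpoch x Q (Suc k) * ((1 - x * Q ^ Suc k) * qbinom_partial_sum Q x (Suc k) s)"
    by (simp add: qpoch_Suc[of x Q "Suc k"] ac_simps)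
  also have "\<dots> = qpoch x Q (Suc k) * qbinom_partial_sum Q x k s
      - x ^ Suc s * (Q ^ Suc k * qpoch x Q (Suc k) * qbinom Q (Suc k) s)"
    unfolding qbinom_partial_sum_Suc by (simp add: algebra_simps)
  finally show ?case
    using Suc.IH by (simp add: algebra_simps)
qed

end

lemma qpoch_mult_T:
  assumes "0 < q" "q < 1"
  shows "qpoch (q ^ \<beta>) (q\<^sup>2) k * T \<beta> q k s
    = 1 - (q ^ \<beta>) ^ Suc s * (\<Sum>j<k. (q\<^sup>2) ^ j * qpoch (q ^ \<beta>) (q\<^sup>2) j * qbinom (q\<^sup>2) j s)"
proof (cases k)
  case 0
  then show ?thesis by (simp add: T_def)
next
  case (Suc k')
  have "0 < q\<^sup>2" "q\<^sup>2 < 1"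
    using assms by (simp_all add: power_less_one_iff)
  moreover have "T \<beta> q k s = qbinom_partial_sum (q\<^sup>2) (q ^ \<beta>) k' s"
    unfolding T_def qbinom_partial_sum_def qbinom_def Suc power_mult
    by (simp add: mult.commute)
  ultimately show ?thesis
    using qpoch_mult_qbinom_partial_sum Suc by simp
qed

lemma qPi_even: "qPi (2 * k) q = qPi k (q\<^sup>2) * qpoch q (q\<^sup>2) k"
proof (induction k)
  case 0
  then show ?case by simp
next
  case (Suc k)
  have "qPi (2 * Suc k) q = qPi (2 * k) q * (1 - q ^ Suc (2 * k)) * (1 - q ^ Suc (Suc (2 * k)))"
    using qPi_Suc[of "Suc (2 * k)" q] qPi_Suc[of "2 * k" q] by simp
  moreover have "q ^ Suc (2 * k) = q * (q\<^sup>2) ^ k" "q ^ Suc (Suc (2 * k)) = (q\<^sup>2) ^ Suc k"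
    by (simp_all add: power_mult power2_eq_square)
  ultimately show ?case
    using Suc.IH by (simp add: qPi_Suc[of k "q\<^sup>2"] qpoch_Suc ac_simps)
qed

lemma qpoch_Suc_shift: "qpoch x Q (Suc m) = (1 - x) * qpoch (x * Q) Q m"
  by (induction m) (simp_all add: qpoch_Suc ac_simps)

lemma qPi_odd: "qPi (2 * k + 1) q = (1 - q) * qPi k (q\<^sup>2) * qpoch (q ^ 3) (q\<^sup>2) k"
proof -
  have "qPi (2 * k + 1) q = qPi k (q\<^sup>2) * qpoch q (q\<^sup>2) (Suc k)"
    using qPi_Suc[of "2 * k" q] by (simp add: qPi_even qpoch_Suc power_mult)
  then show ?thesis
    by (simp add: qpoch_Suc_shift power2_eq_square power3_eq_cube mult.assoc)
qed

lemma qPi_even_term: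
  assumes "0 < q" "q < 1"
  shows "q ^ (2 * j) * qPi (2 * j) q * qPi (j + s) (q\<^sup>2) / ((qPi j (q\<^sup>2))\<^sup>2 * qPi s (q\<^sup>2))
    = (q\<^sup>2) ^ j * qpoch q (q\<^sup>2) j * qbinom (q\<^sup>2) j s"
proof -
  have "0 < qPi j (q\<^sup>2)"
    using assms by (intro qPi_pos) (simp_all add: power_less_one_iff)
  then show ?thesis
    unfolding qPi_even qbinom_def by (simp add: power_mult power2_eq_square)
qed

lemma qPi_odd_term:
  assumes "0 < q" "q < 1"
  shows "q ^ (2 * j) * qPi (2 * j + 1) q * qPi (j + s) (q\<^sup>2) / ((qPi j (q\<^sup>2))\<^sup>2 * qPi s (q\<^sup>2))
    = (1 - q) * ((q\<^sup>2) ^ j * qpoch (q ^ 3) (q\<^sup>2) j * qbinom (q\<^sup>2) j s)"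
proof -
  have "0 < qPi j (q\<^sup>2)"
    using assms by (intro qPi_pos) (simp_all add: power_less_one_iff)
  then show ?thesis
    unfolding qPi_odd qbinom_def by (simp add: power_mult power2_eq_square)
qed

theorem lemma5p1:
  fixes q :: real and k s :: nat
  assumes "0 < q" and "q < 1"
  shows "(T 1 q k s = qPi k (q^2) / qPi (2*k) q *
           (1 - q ^ (s+1) * (\<Sum>j<k. q ^ (2*j) * qPi (2*j) q * qPi (j+s) (q^2)
                                   / ((qPi j (q^2))^2 * qPi s (q^2))))) \<and>
         (T 3 q k s = qPi k (q^2) / qPi (2*k+1) q *
           (1 - q - q ^ (3*s+3) * (\<Sum>j<k. q ^ (2*j) * qPi (2*j+1) q * qPi (j+s) (q^2)
                                   / ((qPi j (q^2))^2 * qPi s (q^2)))))"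
proof -
  let ?sum = "\<lambda>x. \<Sum>j<k. (q\<^sup>2) ^ j * qpoch x (q\<^sup>2) j * qbinom (q\<^sup>2) j s"
  have "0 < q\<^sup>2" "q\<^sup>2 < 1" "0 < q ^ 3" "q ^ 3 < 1"
    using assms by (simp_all add: power_less_one_iff)
  then have pos: "0 < qPi k (q\<^sup>2)" "0 < qpoch q (q\<^sup>2) k" "0 < qpoch (q ^ 3) (q\<^sup>2) k"
    using assms qPi_pos qpoch_pos by simp_all
  have T1: "T 1 q k s = (1 - q ^ (s + 1) * ?sum q) / qpoch q (q\<^sup>2) k"
    using qpoch_mult_T[OF assms, of 1 k s] pos by (simp add: eq_divide_eq mult.commute)
  have "q ^ (3 * s + 3) = (q ^ 3) ^ Suc s"
    by (simp add: power_add mult.commute flip: power_mult)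
  then have T3: "T 3 q k s = (1 - q ^ (3 * s + 3) * ?sum (q ^ 3)) / qpoch (q ^ 3) (q\<^sup>2) k"
    using qpoch_mult_T[OF assms, of 3 k s] pos by (simp add: eq_divide_eq mult.commute)
  have S1: "(\<Sum>j<k. q ^ (2*j) * qPi (2*j) q * qPi (j+s) (q^2) / ((qPi j (q^2))^2 * qPi s (q^2)))
      = ?sum q"
    by (simp only: qPi_even_term[OF assms])
  have S3: "(\<Sum>j<k. q ^ (2*j) * qPi (2*j+1) q * qPi (j+s) (q^2) / ((qPi j (q^2))^2 * qPi s (q^2)))
      = (1 - q) * ?sum (q ^ 3)"
    by (simp only: qPi_odd_term[OF assms] sum_distrib_left)
  show ?thesis
    unfolding S1 S3 unfolding qPi_even qPi_odd T1 T3
    using pos assms by (simp add: field_simps)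
qed

end
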